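(* If an additive integrator map $\psi$ is $N$-affine equivariant, then the partitioned integrator map defined by $\phi(f)=\psi(f^{[1]},\ldots,f^{[N]})$ is P-affine equivariant.
   Context: All spaces are real Banach spaces; $\mathfrak X(Y)$ denotes smooth vector fields on $Y$. For fixed $N$, an additive integrator map $\psi$ is a collection of smooth maps $\psi_Y\colon\mathfrak X(Y)^N\to\mathfrak X(Y)$, one per Banach space $Y$. It is $N$-affine equivariant if for every affine map $A$ between Banach spaces, $f^{[\nu]}\sim_A g^{[\nu]}$ for all $\nu$ implies $\psi(f^{[1]},\ldots,f^{[N]})\sim_A\psi(g^{[1]},\ldots,g^{[N]})$, where $f\sim_\chi g$ means $\chi'(y)f(y)=g(\chi(y))$ for all $y$. A partitioned Banach space is $Y=Y^{[1]}\oplus\cdots\oplus Y^{[N]}$; for $f\in\mathfrak X(Y)$, $f^{[\nu]}$ denotes the vector field on $Y$ obtained by keeping only the $Y^{[\nu]}$-component of $f$, so $f=f^{[1]}+\cdots+f^{[N]}$ is uniquely determined by the partition. A partitioned integrator map is a collection of smooth maps $\phi\colon\mathfrak X(Y)\to\mathfrak X(Y)$, one for each partitioned Banach space. A map $A\colon Y\to U$ between partitioned spaces is P-affine if $A=\bigoplus_\nu A^{[\nu]}$ with each $A^{[\nu]}\colon Y^{[\nu]}\to U^{[\nu]}$ affine; a partitioned integrator map is P-affine equivariant if $f\sim_A g$ implies $\phi(f)\sim_A\phi(g)$ for all P-affine $A$. *)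

theory Defs
  imports "HOL-Analysis.Analysis"
begin

text \<open>A k-linear map is represented as a function on lists of vectors (only lists
of length k matter).  mnorm is its operator norm.\<close>

definition mnorm :: "nat \<Rightarrow> ('a::real_normed_vector list \<Rightarrow> 'b::real_normed_vector) \<Rightarrow> real" where
  "mnorm k M = Sup {norm (M vs) | vs. length vs = k \<and> (\<forall>v\<in>set vs. norm v \<le> 1)}"

definition bounded_multilinear :: "nat \<Rightarrow> ('a::real_normed_vector list \<Rightarrow> 'b::real_normed_vector) \<Rightarrow> bool" where
  "bounded_multilinear k M \<longleftrightarrow>
     (\<forall>i<k. \<forall>vs. length vs = k \<longrightarrow> linear (\<lambda>v. M (vs[i := v]))) \<and>
     bdd_above {norm (M vs) | vs. length vs = k \<and> (\<forall>v\<in>set vs. norm v \<le> 1)}"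

text \<open>D is a full tower of Frechet derivatives of f: D 0 y [] = f y, each D k y is a
bounded k-linear map, and y \<mapsto> D k y is Frechet differentiable (w.r.t. the operator norm)
with derivative D (k+1) y (first slot = direction of differentiation).\<close>

definition derivative_tower :: "('a::real_normed_vector \<Rightarrow> 'b::real_normed_vector) \<Rightarrow> (nat \<Rightarrow> 'a \<Rightarrow> 'a list \<Rightarrow> 'b) \<Rightarrow> bool" where
  "derivative_tower f D \<longleftrightarrow>
     (\<forall>y. D 0 y [] = f y) \<and>
     (\<forall>k y. bounded_multilinear k (D k y)) \<and>
     (\<forall>k y. ((\<lambda>h. mnorm k (\<lambda>vs. D k (y + h) vs - D k y vs - D (Suc k) y (h # vs)) / norm h)
               \<longlongrightarrow> 0) (at 0))"

definition smooth :: "('a::real_normed_vector \<Rightarrow> 'b::real_normed_vector) \<Rightarrow> bool" where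
  "smooth f \<longleftrightarrow> (\<exists>D. derivative_tower f D)"

definition affine_map :: "('a::real_normed_vector \<Rightarrow> 'b::real_normed_vector) \<Rightarrow> bool" where
  "affine_map A \<longleftrightarrow> (\<exists>L b. bounded_linear L \<and> (\<forall>x. A x = L x + b))"

definition related :: "('a::real_normed_vector \<Rightarrow> 'b::real_normed_vector) \<Rightarrow> ('a \<Rightarrow> 'a) \<Rightarrow> ('b \<Rightarrow> 'b) \<Rightarrow> bool" where
  "related C f g \<longleftrightarrow> (\<forall>y. frechet_derivative C (at y) (f y) = g (C y))"

text \<open>The component maps \<psi>_Y of an additive integrator map, on N-tuples (lists of length N)
of smooth vector fields.  N-affine equivariance between the components on two spaces.\<close>

definition affine_equivariant_pair ::
  "nat \<Rightarrow> (('a::real_normed_vector \<Rightarrow> 'a) list \<Rightarrow> ('a \<Rightarrow> 'a)) \<Rightarrow> (('b::real_normed_vector \<Rightarrow> 'b) list \<Rightarrow> ('b \<Rightarrow> 'b)) \<Rightarrow> bool" where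
  "affine_equivariant_pair N \<psi>1 \<psi>2 \<longleftrightarrow>
     (\<forall>A fs gs. affine_map A \<and> length fs = N \<and> length gs = N \<and>
        (\<forall>f\<in>set fs. smooth f) \<and> (\<forall>g\<in>set gs. smooth g) \<and>
        (\<forall>i<N. related A (fs ! i) (gs ! i))
        \<longrightarrow> related A (\<psi>1 fs) (\<psi>2 gs))"

definition maps_fields :: "nat \<Rightarrow> (('a::real_normed_vector \<Rightarrow> 'a) list \<Rightarrow> ('a \<Rightarrow> 'a)) \<Rightarrow> bool" where
  "maps_fields N \<psi> \<longleftrightarrow> (\<forall>fs. length fs = N \<and> (\<forall>f\<in>set fs. smooth f) \<longrightarrow> smooth (\<psi> fs))"

text \<open>A partition Y = Y[0] + ... + Y[N-1] (indices shifted to 0..N-1) is given by the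
bounded linear projections p \<nu> onto the summands: complementary idempotents summing to id.
The summand Y[\<nu>] is range (p \<nu>).\<close>

definition partition :: "nat \<Rightarrow> (nat \<Rightarrow> 'a::real_normed_vector \<Rightarrow> 'a) \<Rightarrow> bool" where
  "partition N p \<longleftrightarrow>
     (\<forall>\<nu><N. bounded_linear (p \<nu>)) \<and>
     (\<forall>\<nu><N. \<forall>\<mu><N. \<forall>y. p \<nu> (p \<mu> y) = (if \<nu> = \<mu> then p \<nu> y else 0)) \<and>
     (\<forall>y. (\<Sum>\<nu><N. p \<nu> y) = y)"

definition component :: "(nat \<Rightarrow> 'a \<Rightarrow> 'a) \<Rightarrow> nat \<Rightarrow> ('a \<Rightarrow> 'a) \<Rightarrow> ('a \<Rightarrow> 'a)" where
  "component p \<nu> f = (\<lambda>y. p \<nu> (f y))"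

text \<open>A = \<oplus> A[\<nu>] with A[\<nu>] : Y[\<nu>] \<rightarrow> U[\<nu>] affine (an affine map on the closed subspace
Y[\<nu>] is the restriction of an affine map on Y, e.g. its composition with p \<nu>).\<close>
definition P_affine :: "nat \<Rightarrow> (nat \<Rightarrow> 'a::real_normed_vector \<Rightarrow> 'a) \<Rightarrow> (nat \<Rightarrow> 'b::real_normed_vector \<Rightarrow> 'b) \<Rightarrow> ('a \<Rightarrow> 'b) \<Rightarrow> bool" where
  "P_affine N p q A \<longleftrightarrow>
     (\<exists>Ac. (\<forall>\<nu><N. affine_map (Ac \<nu>) \<and> Ac \<nu> ` range (p \<nu>) \<subseteq> range (q \<nu>)) \<and>
           (\<forall>y. A y = (\<Sum>\<nu><N. Ac \<nu> (p \<nu> y))))"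

definition induced_partitioned :: "nat \<Rightarrow> (nat \<Rightarrow> 'a \<Rightarrow> 'a) \<Rightarrow> (('a \<Rightarrow> 'a) list \<Rightarrow> ('a \<Rightarrow> 'a)) \<Rightarrow> ('a \<Rightarrow> 'a) \<Rightarrow> ('a \<Rightarrow> 'a)" where
  "induced_partitioned N p \<psi> f = \<psi> (map (\<lambda>\<nu>. component p \<nu> f) [0..<N])"

end

theory Submission
  imports Defs
begin

text \<open>A P-affine map A is affine, A y = L y + b, and its linear part respects the partitions,
  L \<circ> p \<nu> = q \<nu> \<circ> L, because each block maps the summand Y[\<nu>] into U[\<nu>].
  Hence f \<sim>_A g implies f[\<nu>] \<sim>_A g[\<nu>] for every \<nu>; the components are again
  smooth, being compositions with the bounded linear projections.  The equivariance of \<psi>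
  from Y to U then gives the claim.\<close>

lemma bounded_multilinear_iff:
  "bounded_multilinear k M \<longleftrightarrow>
     (\<forall>i<k. \<forall>vs. length vs = k \<longrightarrow> linear (\<lambda>v. M (vs[i := v]))) \<and>
     (\<exists>B. \<forall>vs. length vs = k \<and> (\<forall>v\<in>set vs. norm v \<le> 1) \<longrightarrow> norm (M vs) \<le> B)"
  unfolding bounded_multilinear_def bdd_above_def by blast

lemma mnorm_upper:
  assumes "bounded_multilinear k M" "length vs = k" "\<forall>v\<in>set vs. norm v \<le> 1"
  shows "norm (M vs) \<le> mnorm k M"
  unfolding mnorm_def
  by (rule cSup_upper) (use assms in \<open>auto simp: bounded_multilinear_def\<close>)

lemma mnorm_nonneg:
  assumes "bounded_multilinear k M"
  shows "0 \<le> mnorm k M"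
proof -
  have "norm (M (replicate k 0)) \<le> mnorm k M"
    by (rule mnorm_upper[OF assms]) auto
  then show ?thesis
    by (rule order_trans[OF norm_ge_zero])
qed

lemma mnorm_bounded_linear_comp_le:
  assumes "bounded_multilinear k M" "0 \<le> K" "\<And>x. norm (P x) \<le> norm x * K"
  shows "mnorm k (\<lambda>vs. P (M vs)) \<le> K * mnorm k M"
  unfolding mnorm_def[of k "\<lambda>vs. P (M vs)"]
proof (rule cSup_least)
  show "{norm (P (M vs)) |vs. length vs = k \<and> (\<forall>v\<in>set vs. norm v \<le> 1)} \<noteq> {}"
    by (auto intro!: exI[of _ "replicate k 0"])
next
  fix x assume "x \<in> {norm (P (M vs)) |vs. length vs = k \<and> (\<forall>v\<in>set vs. norm v \<le> 1)}"
  then obtain vs where vs: "length vs = k" "\<forall>v\<in>set vs. norm v \<le> 1" and x: "x = norm (P (M vs))"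
    by blast
  have "norm (M vs) * K \<le> mnorm k M * K"
    using mnorm_upper[OF assms(1) vs] assms(2) by (rule mult_right_mono)
  then show "x \<le> K * mnorm k M"
    using assms(3)[of "M vs"] x by (simp add: mult.commute)
qed

lemma bounded_multilinear_bounded_linear_comp:
  assumes P: "bounded_linear P" and M: "bounded_multilinear k M"
  shows "bounded_multilinear k (\<lambda>vs. P (M vs))"
proof -
  obtain K where K: "\<And>x. norm (P x) \<le> norm x * K" "K > 0"
    using bounded_linear.pos_bounded[OF P] by blast
  have "norm (P (M vs)) \<le> K * mnorm k M" if "length vs = k" "\<forall>v\<in>set vs. norm v \<le> 1" for vs
    using K(1)[of "M vs"] mult_right_mono[OF mnorm_upper[OF M that] less_imp_le[OF K(2)]]
    by (simp add: mult.commute)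
  moreover have "linear (\<lambda>v. P (M (vs[i := v])))" if "i < k" "length vs = k" for i vs
    using linear_compose[of "\<lambda>v. M (vs[i := v])" P] M that bounded_linear.linear[OF P]
    by (auto simp: bounded_multilinear_def o_def)
  ultimately show ?thesis
    unfolding bounded_multilinear_iff by blast
qed

lemma bounded_multilinear_diff:
  assumes M: "bounded_multilinear k M" and M': "bounded_multilinear k M'"
  shows "bounded_multilinear k (\<lambda>vs. M vs - M' vs)"
proof -
  have "norm (M vs - M' vs) \<le> mnorm k M + mnorm k M'"
    if "length vs = k" "\<forall>v\<in>set vs. norm v \<le> 1" for vs
    using norm_triangle_ineq4[of "M vs" "M' vs"] mnorm_upper[OF M that] mnorm_upper[OF M' that]
    by linarith
  moreover have "linear (\<lambda>v. M (vs[i := v]) - M' (vs[i := v]))" if "i < k" "length vs = k" for i vs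
    using M M' that by (intro linear_compose_sub) (auto simp: bounded_multilinear_def)
  ultimately show ?thesis
    unfolding bounded_multilinear_iff by blast
qed

lemma bounded_multilinear_Cons:
  assumes M: "bounded_multilinear (Suc k) M"
  shows "bounded_multilinear k (\<lambda>vs. M (h # vs))"
proof -
  have lin: "linear (\<lambda>v. M (ws[i := v]))" if "i < Suc k" "length ws = Suc k" for i ws
    using M that unfolding bounded_multilinear_def by blast
  have "norm (M (h # vs)) \<le> norm h * mnorm (Suc k) M"
    if vs: "length vs = k" "\<forall>v\<in>set vs. norm v \<le> 1" for vs
  proof -
    have "M (h # vs) = M ((norm h *\<^sub>R sgn h) # vs)"
      by (cases "h = 0") (simp_all add: sgn_div_norm)
    also have "\<dots> = norm h *\<^sub>R M (sgn h # vs)"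
      using linear_scale[OF lin[of 0 "h # vs"]] vs by simp
    finally have "M (h # vs) = norm h *\<^sub>R M (sgn h # vs)" .
    moreover have "norm (M (sgn h # vs)) \<le> mnorm (Suc k) M"
      using mnorm_upper[OF M, of "sgn h # vs"] vs by (auto simp: norm_sgn)
    ultimately show ?thesis
      by (simp add: mult_left_mono)
  qed
  moreover have "linear (\<lambda>v. M (h # vs[i := v]))" if "i < k" "length vs = k" for i vs
    using lin[of "Suc i" "h # vs"] that by simp
  ultimately show ?thesis
    unfolding bounded_multilinear_iff by blast
qed

lemma derivative_tower_bounded_linear_comp:
  assumes P: "bounded_linear P" and D: "derivative_tower f D"
  shows "derivative_tower (\<lambda>y. P (f y)) (\<lambda>k y vs. P (D k y vs))"
proof -
  obtain K where K: "\<And>x. norm (P x) \<le> norm x * K" "K > 0"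
    using bounded_linear.pos_bounded[OF P] by blast
  have bm: "bounded_multilinear k (D k y)" for k y
    using D unfolding derivative_tower_def by blast
  have remainder_limit:
    "((\<lambda>h. mnorm k (\<lambda>vs. P (D k (y + h) vs) - P (D k y vs) - P (D (Suc k) y (h # vs)))
        / norm h) \<longlongrightarrow> 0) (at 0)" for k y
  proof -
    define E where "E h vs = D k (y + h) vs - D k y vs - D (Suc k) y (h # vs)" for h vs
    have E: "bounded_multilinear k (E h)" for h
      unfolding E_def by (intro bounded_multilinear_diff bounded_multilinear_Cons bm)
    have remainder: "(\<lambda>vs. P (D k (y + h) vs) - P (D k y vs) - P (D (Suc k) y (h # vs)))
        = (\<lambda>vs. P (E h vs))" for h
      unfolding E_def by (simp add: linear_diff[OF bounded_linear.linear[OF P]])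
    have "\<forall>h. 0 \<le> mnorm k (\<lambda>vs. P (E h vs)) / norm h"
      using mnorm_nonneg[OF bounded_multilinear_bounded_linear_comp[OF P E]] by simp
    moreover have "\<forall>h. mnorm k (\<lambda>vs. P (E h vs)) / norm h \<le> K * (mnorm k (E h) / norm h)"
      using mnorm_bounded_linear_comp_le[OF E less_imp_le[OF K(2)] K(1)]
      by (simp add: divide_right_mono)
    moreover have "((\<lambda>h. mnorm k (E h) / norm h) \<longlongrightarrow> 0) (at 0)"
      using D unfolding derivative_tower_def E_def by blast
    then have "((\<lambda>h. K * (mnorm k (E h) / norm h)) \<longlongrightarrow> 0) (at 0)"
      by (rule tendsto_mult_right_zero)
    ultimately show ?thesis
      unfolding remainder
      by (rule tendsto_sandwich[OF always_eventually always_eventually tendsto_const])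
  qed
  have D0: "D 0 y [] = f y" for y
    using D unfolding derivative_tower_def by blast
  show ?thesis
    unfolding derivative_tower_def
  proof (intro conjI allI)
    show "P (D 0 y []) = P (f y)" for y
      by (simp only: D0)
    show "bounded_multilinear k (\<lambda>vs. P (D k y vs))" for k y
      by (rule bounded_multilinear_bounded_linear_comp[OF P bm])
  qed (rule remainder_limit)
qed

lemma smooth_bounded_linear_comp:
  assumes "bounded_linear P" "smooth f"
  shows "smooth (\<lambda>y. P (f y))"
  using derivative_tower_bounded_linear_comp[OF assms(1)] assms(2) unfolding smooth_def by blast

lemma frechet_derivative_affine:
  assumes "bounded_linear L"
  shows "frechet_derivative (\<lambda>y. L y + b) (at y) = L"
  by (rule frechet_derivative_at[symmetric])
    (rule has_derivative_add_const[OF bounded_linear_imp_has_derivative[OF assms]])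

lemma linear_part_image_subset:
  assumes "linear L" "\<And>x. A x = L x + b" "subspace S" "subspace T" "A ` S \<subseteq> T"
  shows "L ` S \<subseteq> T"
proof
  fix y assume "y \<in> L ` S"
  then obtain x where "x \<in> S" "y = L x" by blast
  moreover have "L x = A x - A 0"
    using assms(2)[of x] assms(2)[of 0] linear_0[OF assms(1)] by simp
  moreover have "A x \<in> T" "A 0 \<in> T"
    using \<open>x \<in> S\<close> subspace_0[OF assms(3)] assms(5) by blast+
  ultimately show "y \<in> T"
    using subspace_diff[OF assms(4)] by simp
qed

lemma partition_apply_range:
  assumes "partition N q" "\<nu> < N" "\<mu> < N" "x \<in> range (q \<mu>)"
  shows "q \<nu> x = (if \<nu> = \<mu> then x else 0)"
proof -
  obtain w where "x = q \<mu> w" using assms(4) by blast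
  then show ?thesis
    using assms(1-3) unfolding partition_def by auto
qed

lemma partition_sum_intertwines:
  assumes p: "partition N p" and q: "partition N q" and "\<nu> < N"
    and L: "\<And>\<mu>. \<mu> < N \<Longrightarrow> linear (L \<mu>) \<and> L \<mu> ` range (p \<mu>) \<subseteq> range (q \<mu>)"
  shows "(\<Sum>\<mu><N. L \<mu> (p \<mu> (p \<nu> v))) = q \<nu> (\<Sum>\<mu><N. L \<mu> (p \<mu> v))"
proof -
  have "L \<mu> (p \<mu> (p \<nu> v)) = (if \<mu> = \<nu> then L \<nu> (p \<nu> v) else 0)" if "\<mu> < N" for \<mu>
    using p L[OF that] that \<open>\<nu> < N\<close> unfolding partition_def by (simp add: linear_0)
  moreover have "q \<nu> (L \<mu> (p \<mu> v)) = (if \<mu> = \<nu> then L \<nu> (p \<nu> v) else 0)" if "\<mu> < N" for \<mu>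
  proof -
    have "L \<mu> (p \<mu> v) \<in> range (q \<mu>)"
      using L[OF that] by blast
    then show ?thesis
      using partition_apply_range[OF q \<open>\<nu> < N\<close> that] by auto
  qed
  moreover have "q \<nu> (\<Sum>\<mu><N. L \<mu> (p \<mu> v)) = (\<Sum>\<mu><N. q \<nu> (L \<mu> (p \<mu> v)))"
    using q \<open>\<nu> < N\<close> unfolding partition_def by (simp add: linear_sum bounded_linear.linear)
  ultimately show ?thesis
    by simp
qed

lemma P_affine_imp_affine_intertwining:
  assumes p: "partition N p" and q: "partition N q" and A: "P_affine N p q A"
  obtains L b where "bounded_linear L" "\<And>y. A y = L y + b"
    "\<And>\<nu> v. \<nu> < N \<Longrightarrow> L (p \<nu> v) = q \<nu> (L v)"
proof -
  obtain Ac where Ac: "\<forall>\<nu><N. affine_map (Ac \<nu>) \<and> Ac \<nu> ` range (p \<nu>) \<subseteq> range (q \<nu>)"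
    and A_sum: "\<And>y. A y = (\<Sum>\<nu><N. Ac \<nu> (p \<nu> y))"
    using A unfolding P_affine_def by blast
  obtain Lc bc where Lc: "\<And>\<nu>. \<nu> < N \<Longrightarrow> bounded_linear (Lc \<nu>) \<and> (\<forall>x. Ac \<nu> x = Lc \<nu> x + bc \<nu>)"
    using Ac unfolding affine_map_def by metis
  have p_linear: "\<And>\<nu>. \<nu> < N \<Longrightarrow> bounded_linear (p \<nu>)"
    using p unfolding partition_def by blast
  have q_linear: "\<And>\<nu>. \<nu> < N \<Longrightarrow> bounded_linear (q \<nu>)"
    using q unfolding partition_def by blast
  have Lc_range: "Lc \<nu> ` range (p \<nu>) \<subseteq> range (q \<nu>)" if "\<nu> < N" for \<nu>
  proof (rule linear_part_image_subset)
    show "linear (Lc \<nu>)" "Ac \<nu> x = Lc \<nu> x + bc \<nu>" for x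
      using Lc[OF that] bounded_linear.linear by blast+
    show "subspace (range (p \<nu>))"
      by (rule linear_subspace_image[OF bounded_linear.linear[OF p_linear[OF that]] subspace_UNIV])
    show "subspace (range (q \<nu>))"
      by (rule linear_subspace_image[OF bounded_linear.linear[OF q_linear[OF that]] subspace_UNIV])
    show "Ac \<nu> ` range (p \<nu>) \<subseteq> range (q \<nu>)"
      using Ac that by blast
  qed
  show ?thesis
  proof
    show "bounded_linear (\<lambda>y. \<Sum>\<nu><N. Lc \<nu> (p \<nu> y))"
      using bounded_linear_compose[OF conjunct1[OF Lc] p_linear]
      by (intro bounded_linear_sum) simp
    show "A y = (\<Sum>\<nu><N. Lc \<nu> (p \<nu> y)) + (\<Sum>\<nu><N. bc \<nu>)" for y
      using Lc by (simp add: A_sum sum.distrib)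
    show "(\<Sum>\<mu><N. Lc \<mu> (p \<mu> (p \<nu> v))) = q \<nu> (\<Sum>\<mu><N. Lc \<mu> (p \<mu> v))" if "\<nu> < N" for \<nu> v
      using Lc Lc_range
      by (intro partition_sum_intertwines[OF p q that]) (auto intro: bounded_linear.linear)
  qed
qed

lemma related_component:
  assumes "related A f g" "\<And>y. frechet_derivative A (at y) = L" "\<And>v. L (p \<nu> v) = q \<nu> (L v)"
  shows "related A (component p \<nu> f) (component q \<nu> g)"
  using assms unfolding related_def component_def by metis

lemma smooth_component:
  assumes "bounded_linear (p \<nu>)" "smooth f"
  shows "smooth (component p \<nu> f)"
  unfolding component_def by (rule smooth_bounded_linear_comp[OF assms])

theorem proposition4p14:
  fixes N :: nat
    and \<psi>Y :: "('y::banach \<Rightarrow> 'y) list \<Rightarrow> ('y \<Rightarrow> 'y)"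
    and \<psi>U :: "('u::banach \<Rightarrow> 'u) list \<Rightarrow> ('u \<Rightarrow> 'u)"
    and p :: "nat \<Rightarrow> 'y \<Rightarrow> 'y"
    and q :: "nat \<Rightarrow> 'u \<Rightarrow> 'u"
  assumes "maps_fields N \<psi>Y" and "maps_fields N \<psi>U"
    and "affine_equivariant_pair N \<psi>Y \<psi>Y" and "affine_equivariant_pair N \<psi>Y \<psi>U"
    and "affine_equivariant_pair N \<psi>U \<psi>Y" and "affine_equivariant_pair N \<psi>U \<psi>U"
    and "partition N p" and "partition N q"
  shows "\<forall>A f g. P_affine N p q A \<and> smooth f \<and> smooth g \<and> related A f g \<longrightarrow>
           related A (induced_partitioned N p \<psi>Y f) (induced_partitioned N q \<psi>U g)"
proof (intro allI impI, elim conjE)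
  fix A :: "'y \<Rightarrow> 'u" and f g
  assume "P_affine N p q A" "smooth f" "smooth g" "related A f g"
  obtain L b where L: "bounded_linear L" and A: "\<And>y. A y = L y + b"
    and intertwines: "\<And>\<nu> v. \<nu> < N \<Longrightarrow> L (p \<nu> v) = q \<nu> (L v)"
    using P_affine_imp_affine_intertwining[OF assms(7,8) \<open>P_affine N p q A\<close>] by blast
  have "A = (\<lambda>y. L y + b)"
    by (intro ext A)
  then have "affine_map A" and derivative: "\<And>y. frechet_derivative A (at y) = L"
    using L frechet_derivative_affine unfolding affine_map_def by blast+
  have "related A (component p \<nu> f) (component q \<nu> g)" if "\<nu> < N" for \<nu>
    using \<open>related A f g\<close> derivative intertwines[OF that] by (rule related_component)
  moreover have "smooth (component p \<nu> f)" "smooth (component q \<nu> g)" if "\<nu> < N" for \<nu>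
    using assms(7,8) that \<open>smooth f\<close> \<open>smooth g\<close> unfolding partition_def
    by (blast intro: smooth_component)+
  ultimately show "related A (induced_partitioned N p \<psi>Y f) (induced_partitioned N q \<psi>U g)"
    using assms(4) \<open>affine_map A\<close>
    unfolding affine_equivariant_pair_def induced_partitioned_def by simp
qed

end
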